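(* Let $E$ be a nonzero real Banach space and $f\colon E\to\,]{-}\infty,\infty]$ be proper, convex and lower semicontinuous. Then $G((\partial f)^{\mathbb F})\subset G(\partial(f^* ))$, i.e. if $(y^*,y^{**})\in G((\partial f)^{\mathbb F})$ then $f^*(y^* )+f^{**}(y^{**})=\langle y^*,y^{**}\rangle$.
   Context: $f^*(x^* )=\sup_{x\in E}[\langle x,x^*\rangle-f(x)]$, $f^{**}(x^{**})=\sup_{x^*\in E^*}[\langle x^*,x^{**}\rangle-f^*(x^* )]$; $x^*\in\partial f(x)$ iff $f(x)+f^*(x^* )=\langle x,x^*\rangle$ ($\partial f$ is closed, monotone and quasidense). For a multifunction $S\colon E\rightrightarrows E^*$ with nonempty graph: closed means $G(S)$ norm-closed; monotone means $\langle s-t,s^*-t^*\rangle\ge0$ on $G(S)$; quasidense means for every $(x,x^* )$, $\inf_{(s,s^* )\in G(S)}[\tfrac12\|s-x\|^2+\tfrac12\|s^*-x^*\|^2+\langle s-x,s^*-x^*\rangle]\le0$. Let $\varphi_S(x,x^* )=\sup_{(s,s^* )\in G(S)}[\langle s,x^*\rangle+\langle x,s^*\rangle-\langle s,s^*\rangle]$ and $\varphi_S^*$ its conjugate on $E^*\times E^{**}$ under $\langle (x,x^* ),(y^*,y^{**})\rangle=\langle x,y^*\rangle+\langle x^*,y^{**}\rangle$. For $S$ closed, monotone, quasidense, $S^{\mathbb F}\colon E^*\rightrightarrows E^{**}$ is given by $(y^*,y^{**})\in G(S^{\mathbb F})$ iff $\varphi_S^*(y^*,y^{**})=\langle y^*,y^{**}\rangle$.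 *)

theory Defs
  imports "HOL-Analysis.Analysis"
begin

text \<open>E is a real Banach space (type class banach); its dual E* is the space of
bounded linear functionals (blinfun), and E** = (E*)*. The pairing
of x and x* is x* x (blinfun_apply).\<close>

definition proper_fn :: "('a \<Rightarrow> ereal) \<Rightarrow> bool" where
  "proper_fn f \<longleftrightarrow> (\<forall>x. f x \<noteq> -\<infinity>) \<and> (\<exists>x. f x \<noteq> \<infinity>)"

definition convex_fn :: "('a::real_vector \<Rightarrow> ereal) \<Rightarrow> bool" where
  "convex_fn f \<longleftrightarrow> (\<forall>x y (t::real). 0 < t \<and> t < 1 \<longrightarrow>
      f ((1 - t) *\<^sub>R x + t *\<^sub>R y) \<le> ereal (1 - t) * f x + ereal t * f y)"

definition lsc_fn :: "('a::topological_space \<Rightarrow> ereal) \<Rightarrow> bool" where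
  "lsc_fn f \<longleftrightarrow> (\<forall>c::real. closed {x. f x \<le> ereal c})"

definition fconj :: "('a::real_normed_vector \<Rightarrow> ereal) \<Rightarrow> ('a \<Rightarrow>\<^sub>L real) \<Rightarrow> ereal" where
  "fconj f xs = (SUP x. ereal (blinfun_apply xs x) - f x)"

definition subdiff_graph :: "('a::real_normed_vector \<Rightarrow> ereal) \<Rightarrow> ('a \<times> ('a \<Rightarrow>\<^sub>L real)) set" where
  "subdiff_graph f = {(x, xs). f x \<noteq> \<infinity> \<and>
       (\<forall>y. f x + ereal (blinfun_apply xs (y - x)) \<le> f y)}"

definition phi_fn :: "('a::real_normed_vector \<times> ('a \<Rightarrow>\<^sub>L real)) set \<Rightarrow> 'a \<times> ('a \<Rightarrow>\<^sub>L real) \<Rightarrow> ereal" where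
  "phi_fn G = (\<lambda>(x, xs). SUP p\<in>G. ereal (blinfun_apply xs (fst p) + blinfun_apply (snd p) x
                                        - blinfun_apply (snd p) (fst p)))"

definition phi_conj :: "('a::real_normed_vector \<times> ('a \<Rightarrow>\<^sub>L real)) set
    \<Rightarrow> ('a \<Rightarrow>\<^sub>L real) \<times> (('a \<Rightarrow>\<^sub>L real) \<Rightarrow>\<^sub>L real) \<Rightarrow> ereal" where
  "phi_conj G = (\<lambda>(ys, yss). SUP p. ereal (blinfun_apply ys (fst p) + blinfun_apply yss (snd p))
                                      - phi_fn G p)"

definition SF_graph :: "('a::real_normed_vector \<times> ('a \<Rightarrow>\<^sub>L real)) set
    \<Rightarrow> (('a \<Rightarrow>\<^sub>L real) \<times> (('a \<Rightarrow>\<^sub>L real) \<Rightarrow>\<^sub>L real)) set" where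
  "SF_graph G = {(ys, yss). phi_conj G (ys, yss) = ereal (blinfun_apply yss ys)}"

end

theory Submission
  imports Defs
begin

text \<open>The Fitzpatrick function of \<open>\<partial>f\<close> is dominated by the Fenchel--Young function
  \<open>(x, x\<^sup>*) \<mapsto> f x + f\<^sup>* x\<^sup>*\<close>; conjugating reverses this, so \<open>\<phi>\<^sup>*\<close> dominates
  \<open>(y\<^sup>*, y\<^sup>*\<^sup>*) \<mapsto> f\<^sup>* y\<^sup>* + f\<^sup>*\<^sup>* y\<^sup>*\<^sup>*\<close>. On the graph of \<open>(\<partial>f)\<^sup>\<bbbF>\<close> this gives
  \<open>f\<^sup>* y\<^sup>* + f\<^sup>*\<^sup>* y\<^sup>*\<^sup>* \<le> \<langle>y\<^sup>*, y\<^sup>*\<^sup>*\<rangle>\<close>, and the reverse inequality is Fenchel--Young for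
  \<open>f\<^sup>*\<close>. The nonemptiness of \<open>\<partial>f\<close>, forced by the finiteness of \<open>\<phi>\<^sup>*\<close>, keeps the
  extended-real arithmetic away from \<open>\<infinity> - \<infinity>\<close>.\<close>

lemma fconj_upper: "ereal (blinfun_apply xs x) - f x \<le> fconj f xs"
  unfolding fconj_def by (rule SUP_upper) simp

lemma fenchel_young: "ereal (blinfun_apply xs x) \<le> f x + fconj f xs"
  using fconj_upper[of xs x f] by (cases "f x"; cases "fconj f xs") auto

lemma fconj_at_subgradient:
  assumes "(s, ss) \<in> subdiff_graph f"
  shows "fconj f ss = ereal (blinfun_apply ss s) - f s"
proof (rule antisym)
  have sub: "f s + ereal (blinfun_apply ss (y - s)) \<le> f y" for y
    using assms unfolding subdiff_graph_def by auto
  have "f s \<noteq> \<infinity>"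
    using assms unfolding subdiff_graph_def by auto
  then show "fconj f ss \<le> ereal (blinfun_apply ss s) - f s"
    unfolding fconj_def
  proof (intro SUP_least)
    fix y
    show "ereal (blinfun_apply ss y) - f y \<le> ereal (blinfun_apply ss s) - f s"
      using sub[of y] \<open>f s \<noteq> \<infinity>\<close>
      by (cases "f s"; cases "f y") (auto simp: blinfun.diff_right)
  qed
qed (rule fconj_upper)

lemma phi_subdiff_le_fenchel_young:
  "phi_fn (subdiff_graph f) (x, xs) \<le> f x + fconj f xs"
  unfolding phi_fn_def split
proof (rule SUP_least)
  fix p assume "p \<in> subdiff_graph f"
  then obtain t ts where p: "p = (t, ts)" and "f t \<noteq> \<infinity>"
    and sub: "f t + ereal (blinfun_apply ts (x - t)) \<le> f x"
    unfolding subdiff_graph_def by auto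
  have "ereal (blinfun_apply xs t) - f t \<le> fconj f xs"
    by (rule fconj_upper)
  with sub \<open>f t \<noteq> \<infinity>\<close> show "ereal (blinfun_apply xs (fst p) + blinfun_apply (snd p) x
      - blinfun_apply (snd p) (fst p)) \<le> f x + fconj f xs"
    unfolding p by (cases "f t"; cases "f x"; cases "fconj f xs") (auto simp: blinfun.diff_right)
qed

lemma fenchel_young_sum_le_phi_conj:
  assumes "f x \<noteq> -\<infinity>" and "fconj f xs \<noteq> -\<infinity>"
  shows "(ereal (blinfun_apply ys x) - f x) + (ereal (blinfun_apply yss xs) - fconj f xs)
    \<le> phi_conj (subdiff_graph f) (ys, yss)"
proof -
  have "(ereal (blinfun_apply ys x) - f x) + (ereal (blinfun_apply yss xs) - fconj f xs)
      = ereal (blinfun_apply ys x + blinfun_apply yss xs) - (f x + fconj f xs)"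
    using assms by (cases "f x"; cases "fconj f xs") auto
  also have "\<dots> \<le> ereal (blinfun_apply ys x + blinfun_apply yss xs) - phi_fn (subdiff_graph f) (x, xs)"
    by (intro ereal_minus_mono order_refl phi_subdiff_le_fenchel_young)
  also have "\<dots> \<le> phi_conj (subdiff_graph f) (ys, yss)"
    unfolding phi_conj_def split by (rule SUP_upper2[of "(x, xs)"]) auto
  finally show ?thesis .
qed

lemma SF_graph_nonempty_imp: "(ys, yss) \<in> SF_graph G \<Longrightarrow> G \<noteq> {}"
  by (auto simp: SF_graph_def phi_conj_def phi_fn_def bot_ereal_def)

lemma ereal_SUP_add_SUP_le:
  fixes a b :: "_ \<Rightarrow> ereal"
  assumes le: "\<And>x y. a x + b y \<le> ereal c"
    and "a u \<noteq> -\<infinity>" "b v \<noteq> -\<infinity>"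
    and "\<And>x. a x \<noteq> \<infinity>" "\<And>y. b y \<noteq> \<infinity>"
  shows "(SUP x. a x) + (SUP y. b y) \<le> ereal c"
proof -
  obtain \<alpha> where \<alpha>: "a u = ereal \<alpha>"
    using assms by (cases "a u") auto
  have "b y \<le> ereal (c - \<alpha>)" for y
    using le[of u y] \<alpha> by (cases "b y") auto
  then have "(SUP y. b y) \<le> ereal (c - \<alpha>)"
    by (rule SUP_least)
  moreover have "b v \<le> (SUP y. b y)"
    by (rule SUP_upper) simp
  ultimately obtain \<beta> where \<beta>: "(SUP y. b y) = ereal \<beta>"
    using assms by (cases "SUP y. b y") auto
  have "a x + (SUP y. b y) \<le> ereal c" for x
  proof (cases "a x = -\<infinity>")
    case False
    then show ?thesis
      using SUP_ereal_le_addI[of b "a x" "ereal c"] le by (simp add: add.commute)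
  qed (simp add: \<beta>)
  then show ?thesis
    using \<beta> by (intro SUP_ereal_le_addI) auto
qed

theorem lemma3p3:
  fixes f :: "'a::banach \<Rightarrow> ereal"
  assumes "\<exists>x::'a. x \<noteq> 0"
    and "proper_fn f" and "convex_fn f" and "lsc_fn f"
    and "(ys, yss) \<in> SF_graph (subdiff_graph f)"
  shows "fconj f ys + fconj (fconj f) yss = ereal (blinfun_apply yss ys)"
proof (rule antisym)
  obtain s ss where sub: "(s, ss) \<in> subdiff_graph f"
    using SF_graph_nonempty_imp[OF assms(5)] by auto
  have f_not_MInf: "f x \<noteq> -\<infinity>" for x
    using assms(2) unfolding proper_fn_def by auto
  obtain r where r: "f s = ereal r"
    using sub f_not_MInf[of s] unfolding subdiff_graph_def by (cases "f s") auto
  have fconj_not_MInf: "fconj f xs \<noteq> -\<infinity>" for xs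
    using fconj_upper[of xs s f] r by auto
  have "(SUP x. ereal (blinfun_apply ys x) - f x) + (SUP xs. ereal (blinfun_apply yss xs) - fconj f xs)
      \<le> ereal (blinfun_apply yss ys)"
  proof (rule ereal_SUP_add_SUP_le[where u = s and v = ss])
    show "(ereal (blinfun_apply ys x) - f x) + (ereal (blinfun_apply yss xs) - fconj f xs)
        \<le> ereal (blinfun_apply yss ys)" for x xs
      using fenchel_young_sum_le_phi_conj[OF f_not_MInf fconj_not_MInf, of ys x yss xs] assms(5)
      by (simp add: SF_graph_def)
  qed (use r f_not_MInf fconj_not_MInf fconj_at_subgradient[OF sub] in
      \<open>auto simp: ereal_minus_eq_PInfty_iff\<close>)
  then show "fconj f ys + fconj (fconj f) yss \<le> ereal (blinfun_apply yss ys)"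
    unfolding fconj_def .
qed (rule fenchel_young)

end
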